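(* Let $G$ be a supergraceful graph with $p$ nodes and $q$ edges having a node $u$ of degree $p-1$, and suppose $G$ has a total labeling $\varphi$ with $\varphi(u) = p+q$. Then there exists a total labeling $\mu$ of $G$ such that $1 \in N(\mu)$.
   Context: Graphs are finite, simple. For a labeling $\varphi: V(G) \to \mathbb{Z}_{>0}$ let $N(\varphi) = \{\varphi(x) : x \in V(G)\}$ and $E(\varphi) = \{|\varphi(x)-\varphi(y)| : xy \in E(G)\}$. A total labeling of a graph $G$ with $p$ nodes and $q$ edges is a map $\varphi$ such that the $p$ node labels and the $q$ edge labels are pairwise distinct and $N(\varphi) \cup E(\varphi) = \{1,\dots,p+q\}$; $G$ is supergraceful if it admits a total labeling. *)

theory Defs
  imports Main
begin

definition simple_graph :: "'a set \<Rightarrow> 'a set set \<Rightarrow> bool" where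
  "simple_graph V E \<longleftrightarrow> finite V \<and>
     (\<forall>e\<in>E. \<exists>x y. x \<in> V \<and> y \<in> V \<and> x \<noteq> y \<and> e = {x, y})"

definition degree :: "'a set set \<Rightarrow> 'a \<Rightarrow> nat" where
  "degree E u = card {e \<in> E. u \<in> e}"

definition edge_label :: "('a \<Rightarrow> nat) \<Rightarrow> 'a set \<Rightarrow> nat" where
  "edge_label \<phi> e = (THE d. \<exists>x y. e = {x, y} \<and> d = nat \<bar>int (\<phi> x) - int (\<phi> y)\<bar>)"

definition node_labels :: "'a set \<Rightarrow> ('a \<Rightarrow> nat) \<Rightarrow> nat set" where
  "node_labels V \<phi> = \<phi> ` V"

definition edge_labels :: "'a set set \<Rightarrow> ('a \<Rightarrow> nat) \<Rightarrow> nat set" where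
  "edge_labels E \<phi> = edge_label \<phi> ` E"

definition total_labeling :: "'a set \<Rightarrow> 'a set set \<Rightarrow> ('a \<Rightarrow> nat) \<Rightarrow> bool" where
  "total_labeling V E \<phi> \<longleftrightarrow>
     (\<forall>x\<in>V. 0 < \<phi> x) \<and>
     inj_on \<phi> V \<and> inj_on (edge_label \<phi>) E \<and>
     node_labels V \<phi> \<inter> edge_labels E \<phi> = {} \<and>
     node_labels V \<phi> \<union> edge_labels E \<phi> = {1 .. card V + card E}"

definition supergraceful :: "'a set \<Rightarrow> 'a set set \<Rightarrow> bool" where
  "supergraceful V E \<longleftrightarrow> (\<exists>\<phi>. total_labeling V E \<phi>)"

end

theory Submission
  imports Defs
begin

(* Let N = p + q = \<phi>(u). If 1 is not already a node label, then N - 1 is a node label,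
   since an edge label N - 1 would need the endpoint labels 1 and N. Because u is adjacent
   to every other node, replacing \<phi>(x) by N - \<phi>(x) for x \<noteq> u (and keeping \<phi>(u) = N) just
   swaps the node label of x with the label of the edge ux, and leaves the labels of the
   edges avoiding u unchanged. So the new labeling has the same label set {1..N}, which
   by counting makes it a total labeling, and the node labelled N - 1 now carries 1. *)

lemma edge_label_doubleton [simp]:
  "edge_label \<phi> {x, y} = nat \<bar>int (\<phi> x) - int (\<phi> y)\<bar>"
  unfolding edge_label_def
  by (rule the_equality) (auto simp: doubleton_eq_iff)

lemma simple_graph_edgeE:
  assumes "simple_graph V E" "e \<in> E"
  obtains x y where "x \<in> V" "y \<in> V" "x \<noteq> y" "e = {x, y}"
  using assms unfolding simple_graph_def by blast

lemma simple_graph_finite_vertices: "simple_graph V E \<Longrightarrow> finite V"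
  by (simp add: simple_graph_def)

lemma simple_graph_finite_edges:
  assumes "simple_graph V E"
  shows "finite E"
proof -
  have "E \<subseteq> Pow V"
    using assms by (auto elim: simple_graph_edgeE)
  then show ?thesis
    using simple_graph_finite_vertices[OF assms] by (meson finite_Pow_iff finite_subset)
qed

lemma edges_at_universal_vertex:
  assumes G: "simple_graph V E" and "u \<in> V" and deg: "degree E u = card V - 1"
  shows "{e \<in> E. u \<in> e} = (\<lambda>x. {u, x}) ` (V - {u})"
proof (rule card_subset_eq)
  have "finite V" using G by (rule simple_graph_finite_vertices)
  then show "finite ((\<lambda>x. {u, x}) ` (V - {u}))" by simp
  show "{e \<in> E. u \<in> e} \<subseteq> (\<lambda>x. {u, x}) ` (V - {u})"
    using G by (auto elim!: simple_graph_edgeE)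
  have "inj_on (\<lambda>x. {u, x}) (V - {u})"
    by (auto simp: inj_on_def doubleton_eq_iff)
  then show "card {e \<in> E. u \<in> e} = card ((\<lambda>x. {u, x}) ` (V - {u}))"
    using deg \<open>u \<in> V\<close> \<open>finite V\<close> by (simp add: degree_def card_image)
qed

lemma total_labeling_iff_labels_eq:
  assumes "finite V" "finite E"
  shows "total_labeling V E \<phi> \<longleftrightarrow> node_labels V \<phi> \<union> edge_labels E \<phi> = {1 .. card V + card E}"
proof
  assume cover: "node_labels V \<phi> \<union> edge_labels E \<phi> = {1 .. card V + card E}"
  let ?A = "\<phi> ` V" and ?B = "edge_label \<phi> ` E"
  have "card ?A + card ?B = card (?A \<union> ?B) + card (?A \<inter> ?B)"
    using assms by (intro card_Un_Int) auto
  moreover have "card (?A \<union> ?B) = card V + card E"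
    using cover by (simp add: node_labels_def edge_labels_def)
  moreover have "card ?A \<le> card V" "card ?B \<le> card E"
    using assms by (auto intro: card_image_le)
  ultimately have "card ?A = card V" "card ?B = card E" "card (?A \<inter> ?B) = 0"
    by linarith+
  moreover have "finite (?A \<inter> ?B)" using assms by blast
  moreover have "\<forall>x\<in>V. 0 < \<phi> x"
    using cover by (force simp: node_labels_def)
  ultimately show "total_labeling V E \<phi>"
    using assms cover
    by (simp add: total_labeling_def node_labels_def edge_labels_def inj_on_iff_eq_card)
qed (simp add: total_labeling_def)

lemma top_minus_one_node_label:
  assumes G: "simple_graph V E" and tl: "total_labeling V E \<phi>" and "V \<noteq> {}"
    and no1: "1 \<notin> node_labels V \<phi>"
  shows "card V + card E - 1 \<in> node_labels V \<phi>"
proof -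
  let ?N = "card V + card E"
  have labels: "node_labels V \<phi> \<union> edge_labels E \<phi> = {1 .. ?N}"
    using tl by (simp add: total_labeling_def)
  have range: "2 \<le> \<phi> x \<and> \<phi> x \<le> ?N" if "x \<in> V" for x
  proof -
    have "\<phi> x \<in> node_labels V \<phi>"
      using that by (simp add: node_labels_def)
    then have "\<phi> x \<in> {1 .. ?N}" and "\<phi> x \<noteq> 1"
      using no1 unfolding labels[symmetric] by auto
    then show ?thesis by simp
  qed
  have "?N - 1 \<in> node_labels V \<phi> \<union> edge_labels E \<phi>"
    using range \<open>V \<noteq> {}\<close> unfolding labels by fastforce
  moreover have "edge_label \<phi> e \<noteq> ?N - 1" if "e \<in> E" for e
  proof -
    obtain x y where "x \<in> V" "y \<in> V" "e = {x, y}"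
      using G \<open>e \<in> E\<close> by (rule simple_graph_edgeE)
    with range[of x] range[of y] show ?thesis by auto
  qed
  ultimately show ?thesis
    unfolding edge_labels_def by (metis UnE imageE)
qed

definition complement_labeling :: "'a \<Rightarrow> nat \<Rightarrow> ('a \<Rightarrow> nat) \<Rightarrow> 'a \<Rightarrow> nat" where
  "complement_labeling u n \<phi> x = (if x = u then n else n - \<phi> x)"

lemma labels_complement_labeling:
  assumes G: "simple_graph V E" and "u \<in> V"
    and star: "{e \<in> E. u \<in> e} = (\<lambda>x. {u, x}) ` (V - {u})"
    and top: "\<phi> u = n" "\<And>x. x \<in> V \<Longrightarrow> \<phi> x \<le> n"
  shows "node_labels V (complement_labeling u n \<phi>) \<union> edge_labels E (complement_labeling u n \<phi>)
    = node_labels V \<phi> \<union> edge_labels E \<phi>"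
proof -
  let ?\<mu> = "complement_labeling u n \<phi>"
  let ?S = "{e \<in> E. u \<in> e}" and ?R = "V - {u}"
  have V_eq: "V = insert u ?R"
    using \<open>u \<in> V\<close> by blast
  have edges_split: "edge_label f ` E = edge_label f ` ?S \<union> edge_label f ` (E - ?S)" for f
    by blast
  have nodes_\<mu>: "?\<mu> ` V = insert n ((\<lambda>x. n - \<phi> x) ` ?R)"
    by (subst V_eq, simp only: image_insert) (auto simp: complement_labeling_def)
  have nodes_\<phi>: "\<phi> ` V = insert n (\<phi> ` ?R)"
    by (subst V_eq, simp only: image_insert) (simp add: top)
  have star_\<mu>: "edge_label ?\<mu> ` ?S = \<phi> ` ?R"
    unfolding star image_image using top(2)
    by (auto simp: complement_labeling_def intro!: image_cong)
  have star_\<phi>: "edge_label \<phi> ` ?S = (\<lambda>x. n - \<phi> x) ` ?R"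
    unfolding star image_image using top by (auto intro!: image_cong)
  have rest: "edge_label ?\<mu> ` (E - ?S) = edge_label \<phi> ` (E - ?S)"
  proof (rule image_cong[OF refl])
    fix e assume "e \<in> E - ?S"
    then obtain x y where "x \<in> ?R" "y \<in> ?R" "e = {x, y}"
      using G by (auto elim!: simple_graph_edgeE)
    then show "edge_label ?\<mu> e = edge_label \<phi> e"
      using top(2) by (auto simp: complement_labeling_def)
  qed
  show ?thesis
    unfolding node_labels_def edge_labels_def edges_split nodes_\<mu> nodes_\<phi> star_\<mu> star_\<phi> rest
    by auto
qed

lemma total_labeling_complement_labeling:
  assumes G: "simple_graph V E" and tl: "total_labeling V E \<phi>" and "u \<in> V"
    and deg: "degree E u = card V - 1" and top: "\<phi> u = card V + card E"
  shows "total_labeling V E (complement_labeling u (card V + card E) \<phi>)"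
proof -
  have fin: "finite V" "finite E"
    using G by (auto intro: simple_graph_finite_vertices simple_graph_finite_edges)
  have "\<phi> x \<le> card V + card E" if "x \<in> V" for x
    using tl that by (auto simp: total_labeling_def node_labels_def)
  then show ?thesis
    using labels_complement_labeling[where \<phi> = \<phi> and u = u, OF G \<open>u \<in> V\<close>
        edges_at_universal_vertex[OF G \<open>u \<in> V\<close> deg] top] tl
    by (simp add: total_labeling_iff_labels_eq[OF fin])
qed

theorem corollary8p3:
  fixes V :: "'a set" and E :: "'a set set" and u :: 'a and \<phi> :: "'a \<Rightarrow> nat"
  assumes "simple_graph V E"
    and "supergraceful V E"
    and "u \<in> V"
    and "degree E u = card V - 1"
    and "total_labeling V E \<phi>"
    and "\<phi> u = card V + card E"
  shows "\<exists>\<mu>. total_labeling V E \<mu> \<and> 1 \<in> node_labels V \<mu>"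
proof (cases "1 \<in> node_labels V \<phi>")
  case True
  then show ?thesis using assms(5) by blast
next
  case False
  let ?N = "card V + card E"
  have "V \<noteq> {}" using assms(3) by blast
  then have "?N - 1 \<in> \<phi> ` V"
    using top_minus_one_node_label[OF assms(1,5) _ False] by (simp add: node_labels_def)
  then obtain w where w: "w \<in> V" "\<phi> w = ?N - 1"
    by (metis imageE)
  have "w \<noteq> u" "\<phi> w \<ge> 1"
    using w assms(3,5,6) False by (auto simp: node_labels_def total_labeling_def)
  then have "1 \<in> node_labels V (complement_labeling u ?N \<phi>)"
    using w unfolding node_labels_def complement_labeling_def
    by (auto intro!: image_eqI[of _ _ w])
  with total_labeling_complement_labeling[OF assms(1,5,3,4,6)] show ?thesis
    by blast
qed

end
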